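(* Let $Q=\sum_{i\in I}E_{i,\sigma(i)}\in N_n$ be a subpermutation and let $A=[a_{ij}]\in QU_n$ be a Belitskii canonical form under $B_n$-similarity. Let $i\in I$ and $j\in[n]$. Then $a_{ij}=0$ (i.e. $(i,j)\notin E_A$) in each of the following situations: (1) $i^+<j$ and $j\in S_h$; (2) $j\notin S_t$ and $i<j^-$. In particular, if $i$ and $j$ lie in the same chain of $G_Q$ and $j\neq i^+$, then $a_{ij}=0$.
   Context: $\mathbb F$ is a field; $[n]=\{1,\dots,n\}$. $B_n$ (resp. $U_n$, $N_n$) is the set of $n\times n$ invertible upper triangular (resp. upper triangular with diagonal entries $1$, strictly upper triangular) matrices over $\mathbb F$; $QU_n=\{QU:U\in U_n\}$; $E_{ij}$ is the matrix unit. A subpermutation is a matrix each of whose rows and columns has at most one nonzero entry, equal to $1$; here $I\subseteq[n]$ and $\sigma:I\to[n]$ is injective with $i<\sigma(i)$. For a matrix $X=[x_{ij}]$, $G_X$ is the directed graph on $[n]$ with arc set $E_X=\{(i,j):x_{ij}\neq0\}$. The connected components of $G_Q$ are directed paths $i_1\to\cdots\to i_p$ with $i_1<\cdots<i_p$, called chains. Notation: $i^+:=\sigma(i)$ for $i\in I$, $j^-:=\sigma^{-1}(j)$ for $j\in\sigma(I)$; $S_h=[n]\setminus I$ (chain heads) and $S_t=[n]\setminus\sigma(I)$ (chain tails). Belitskii order on positions $\{(i,j):1\le i<j\le n\}$: $(i,j)\prec(i',j')$ iff $i>i'$, or $i=i'$ and $j<j'$. Belitskii's algorithm for $B_n$-similarity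 on $N_n$: given $A\in N_n$ put $A^{(0)}=A$, $G^{(0)}=B_n$. For $k=0,1,\dots$, let $(p,q)$ be the $(k+1)$th position in Belitskii order and look at the $(p,q)$ entries of all matrices $G^{(k)}$-similar to $A^{(k)}$: (a) if this entry is always $0$ or can take every value of $\mathbb F$, choose $A^{(k+1)}$ $G^{(k)}$-similar to $A^{(k)}$ with that entry $0$; (b) if it takes exactly the values of $\mathbb F\setminus\{0\}$, choose $A^{(k+1)}$ with that entry $1$; (c) otherwise it is a constant $\lambda\ne0$ and $A^{(k+1)}=A^{(k)}$. $G^{(k+1)}$ is the subgroup of $g\in G^{(k)}$ such that $gA^{(k+1)}g^{-1}$ agrees with $A^{(k+1)}$ in the first $k+1$ positions. The final matrix is the Belitskii canonical form of $A$; a matrix is a Belitskii canonical form if it is the Belitskii canonical form of some matrix. *)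

theory Defs
  imports Main
begin

text \<open>n x n matrices over a field are represented as functions nat => nat => 'a,
  with row/column indices in {1..n} and all entries outside that range equal to 0.\<close>

type_synonym 'a mat = "nat \<Rightarrow> nat \<Rightarrow> 'a"

definition mats :: "nat \<Rightarrow> ('a::zero) mat set" where
  "mats n = {A. \<forall>i j. i \<notin> {1..n} \<or> j \<notin> {1..n} \<longrightarrow> A i j = 0}"

definition mmul :: "nat \<Rightarrow> ('a::comm_semiring_0) mat \<Rightarrow> 'a mat \<Rightarrow> 'a mat" where
  "mmul n A B = (\<lambda>i j. \<Sum>k\<in>{1..n}. A i k * B k j)"

definition idm :: "nat \<Rightarrow> ('a::{zero,one}) mat" where
  "idm n = (\<lambda>i j. if i = j \<and> i \<in> {1..n} then 1 else 0)"

definition matunit :: "nat \<Rightarrow> nat \<Rightarrow> ('a::{zero,one}) mat" where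
  "matunit p q = (\<lambda>i j. if i = p \<and> j = q then 1 else 0)"

definition invertible_mat :: "nat \<Rightarrow> ('a::comm_semiring_1) mat \<Rightarrow> bool" where
  "invertible_mat n g \<longleftrightarrow> g \<in> mats n \<and>
     (\<exists>h\<in>mats n. mmul n g h = idm n \<and> mmul n h g = idm n)"

definition minv :: "nat \<Rightarrow> ('a::comm_semiring_1) mat \<Rightarrow> 'a mat" where
  "minv n g = (THE h. h \<in> mats n \<and> mmul n g h = idm n \<and> mmul n h g = idm n)"

definition upper_tri :: "nat \<Rightarrow> ('a::zero) mat \<Rightarrow> bool" where
  "upper_tri n A \<longleftrightarrow> A \<in> mats n \<and> (\<forall>i j. j < i \<longrightarrow> A i j = 0)"

definition Bn_mats :: "nat \<Rightarrow> ('a::field) mat set" where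
  "Bn_mats n = {g. invertible_mat n g \<and> upper_tri n g}"

definition Un_mats :: "nat \<Rightarrow> ('a::field) mat set" where
  "Un_mats n = {U. upper_tri n U \<and> (\<forall>i\<in>{1..n}. U i i = 1)}"

definition Nn_mats :: "nat \<Rightarrow> ('a::field) mat set" where
  "Nn_mats n = {A. upper_tri n A \<and> (\<forall>i. A i i = 0)}"

definition QUn :: "nat \<Rightarrow> ('a::field) mat \<Rightarrow> 'a mat set" where
  "QUn n Q = {mmul n Q U | U. U \<in> Un_mats n}"

definition subperm :: "nat set \<Rightarrow> (nat \<Rightarrow> nat) \<Rightarrow> ('a::{zero,one}) mat" where
  "subperm I \<sigma> = (\<lambda>i j. if i \<in> I \<and> j = \<sigma> i then 1 else 0)"

definition conj_mat :: "nat \<Rightarrow> ('a::field) mat \<Rightarrow> 'a mat \<Rightarrow> 'a mat" where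
  "conj_mat n g A = mmul n (mmul n g A) (minv n g)"

definition similar_in :: "nat \<Rightarrow> ('a::field) mat set \<Rightarrow> 'a mat \<Rightarrow> 'a mat \<Rightarrow> bool" where
  "similar_in n G A B \<longleftrightarrow> (\<exists>g\<in>G. B = conj_mat n g A)"

definition bel_prec :: "nat \<times> nat \<Rightarrow> nat \<times> nat \<Rightarrow> bool" where
  "bel_prec x y \<longleftrightarrow> fst x > fst y \<or> (fst x = fst y \<and> snd x < snd y)"

definition bel_positions :: "nat \<Rightarrow> (nat \<times> nat) list" where
  "bel_positions n = concat (map (\<lambda>i. map (\<lambda>j. (i, j)) [Suc i..<Suc n]) (rev [1..<n]))"

definition bel_step :: "nat \<Rightarrow> nat \<Rightarrow> ('a::field) mat \<Rightarrow> 'a mat set \<Rightarrow> 'a mat \<Rightarrow> 'a mat set \<Rightarrow> bool" where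
  "bel_step n k A G A' G' \<longleftrightarrow>
    (let p = fst (bel_positions n ! k); q = snd (bel_positions n ! k);
         V = {conj_mat n g A p q | g. g \<in> G} in
     (if V = {0} \<or> V = UNIV then similar_in n G A A' \<and> A' p q = 0
      else if V = UNIV - {0} then similar_in n G A A' \<and> A' p q = 1
      else A' = A)
     \<and> G' = {g \<in> G. \<forall>pos \<in> set (take (Suc k) (bel_positions n)).
                 conj_mat n g A' (fst pos) (snd pos) = A' (fst pos) (snd pos)})"

definition belitskii_cf_of :: "nat \<Rightarrow> ('a::field) mat \<Rightarrow> 'a mat \<Rightarrow> bool" where
  "belitskii_cf_of n A C \<longleftrightarrow> A \<in> Nn_mats n \<and>
    (\<exists>As Gs. As 0 = A \<and> Gs 0 = Bn_mats n \<and>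
      (\<forall>k < length (bel_positions n). bel_step n k (As k) (Gs k) (As (Suc k)) (Gs (Suc k))) \<and>
      C = As (length (bel_positions n)))"

definition is_belitskii_cf :: "nat \<Rightarrow> ('a::field) mat \<Rightarrow> bool" where
  "is_belitskii_cf n C \<longleftrightarrow> (\<exists>A. belitskii_cf_of n A C)"

definition same_chain :: "nat set \<Rightarrow> (nat \<Rightarrow> nat) \<Rightarrow> nat \<Rightarrow> nat \<Rightarrow> bool" where
  "same_chain I \<sigma> i j \<longleftrightarrow>
     (i, j) \<in> ({(k, \<sigma> k) | k. k \<in> I} \<union> {(\<sigma> k, k) | k. k \<in> I})\<^sup>*"

end

theory Submission
  imports Defs
begin

text \<open>Rule (a) of Belitskii's algorithm turns an entry into 0 whenever, at the stage where its
  position is treated, the stabilizer of the earlier positions can give it every value.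
  Conjugation by \<open>1 + t X\<close>, with \<open>X\<close> strictly upper triangular, \<open>X X = 0\<close> and \<open>X B X = 0\<close>, adds
  \<open>t (X B - B X)\<close> to \<open>B\<close>; so it suffices to exhibit such an \<open>X\<close> whose commutator with \<open>B\<close>
  vanishes at all earlier positions but not at \<open>(i, j)\<close>. The rows of \<open>A = Q U\<close> are rows of
  \<open>U\<close>: row \<open>p\<close> of \<open>A\<close> is row \<open>p\<^sup>+\<close> of \<open>U\<close>, or zero if \<open>p \<notin> I\<close>. Within a chain, a vertex \<open>j\<close>
  beyond \<open>i\<^sup>+\<close> has its predecessor \<open>j\<^sup>-\<close> beyond \<open>i\<close>, so the last claim follows from (2).\<close>

section \<open>Matrix algebra\<close>

lemma sum_eq_single:
  assumes "finite S" "a \<in> S" "\<And>k. k \<in> S \<Longrightarrow> k \<noteq> a \<Longrightarrow> f k = 0"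
  shows "sum f S = f a"
  using sum.mono_neutral_left[of S "{a}" f] assms by auto

lemma mats_outside:
  "A \<in> mats n \<Longrightarrow> i \<notin> {1..n} \<or> j \<notin> {1..n} \<Longrightarrow> A i j = 0"
  unfolding mats_def by auto

lemma mmul_in_mats: "A \<in> mats n \<Longrightarrow> B \<in> mats n \<Longrightarrow> mmul n A B \<in> mats n"
  unfolding mats_def mmul_def by auto

lemma idm_in_mats: "idm n \<in> mats n"
  unfolding mats_def idm_def by auto

lemma mmul_assoc: "mmul n (mmul n A B) C = mmul n A (mmul n B C)"
  unfolding mmul_def
  by (intro ext) (simp add: sum_distrib_left sum_distrib_right mult.assoc, rule sum.swap)

lemma mmul_idm_left:
  fixes A :: "'a::comm_semiring_1 mat"
  assumes "A \<in> mats n"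
  shows "mmul n (idm n) A = A"
proof (intro ext)
  fix i j
  show "mmul n (idm n) A i j = A i j"
  proof (cases "i \<in> {1..n}")
    case True
    then show ?thesis unfolding mmul_def by (subst sum_eq_single[where a = i]) (auto simp: idm_def)
  qed (use mats_outside[OF assms] in \<open>auto simp: mmul_def idm_def\<close>)
qed

lemma mmul_idm_right:
  fixes A :: "'a::comm_semiring_1 mat"
  assumes "A \<in> mats n"
  shows "mmul n A (idm n) = A"
proof (intro ext)
  fix i j
  show "mmul n A (idm n) i j = A i j"
  proof (cases "j \<in> {1..n}")
    case True
    then show ?thesis unfolding mmul_def by (subst sum_eq_single[where a = j]) (auto simp: idm_def)
  qed (use mats_outside[OF assms] in \<open>auto simp: mmul_def idm_def\<close>)
qed

lemma mmul_add_left: "mmul n (\<lambda>a c. A a c + B a c) C = (\<lambda>a c. mmul n A C a c + mmul n B C a c)"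
  unfolding mmul_def by (simp add: distrib_right sum.distrib)

lemma mmul_add_right: "mmul n C (\<lambda>a c. A a c + B a c) = (\<lambda>a c. mmul n C A a c + mmul n C B a c)"
  unfolding mmul_def by (simp add: distrib_left sum.distrib)

lemma mmul_diff_left:
  "mmul n (\<lambda>a c. (A a c :: 'a::comm_ring) - B a c) C = (\<lambda>a c. mmul n A C a c - mmul n B C a c)"
  unfolding mmul_def by (simp add: left_diff_distrib sum_subtractf)

lemma mmul_diff_right:
  "mmul n C (\<lambda>a c. (A a c :: 'a::comm_ring) - B a c) = (\<lambda>a c. mmul n C A a c - mmul n C B a c)"
  unfolding mmul_def by (simp add: right_diff_distrib sum_subtractf)

lemma mmul_scale_left: "mmul n (\<lambda>a c. t * A a c) C = (\<lambda>a c. t * mmul n A C a c)"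
  unfolding mmul_def by (simp add: sum_distrib_left mult.assoc)

lemma mmul_scale_right: "mmul n C (\<lambda>a c. t * A a c) = (\<lambda>a c. t * mmul n C A a c)"
  unfolding mmul_def by (simp add: sum_distrib_left mult.left_commute)

lemma mmul_matunit_left:
  fixes B :: "'a::comm_semiring_1 mat"
  assumes "b \<in> {1..n}"
  shows "mmul n (matunit a b) B p q = (if p = a then B b q else 0)"
  unfolding mmul_def using assms by (subst sum_eq_single[where a = b]) (auto simp: matunit_def)

lemma mmul_matunit_right:
  fixes B :: "'a::comm_semiring_1 mat"
  assumes "a \<in> {1..n}"
  shows "mmul n B (matunit a b) p q = (if q = b then B p a else 0)"
  unfolding mmul_def using assms by (subst sum_eq_single[where a = a]) (auto simp: matunit_def)

lemma minv_eqI: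
  fixes g h :: "'a::comm_semiring_1 mat"
  assumes h: "h \<in> mats n" "mmul n g h = idm n" "mmul n h g = idm n"
  shows "minv n g = h"
  unfolding minv_def
proof (rule the_equality)
  fix h' assume h': "h' \<in> mats n \<and> mmul n g h' = idm n \<and> mmul n h' g = idm n"
  then have "h' = mmul n h' (mmul n g h)" by (simp add: h mmul_idm_right)
  also have "\<dots> = mmul n (mmul n h' g) h" by (simp only: mmul_assoc)
  also have "\<dots> = h" using h' h by (simp add: mmul_idm_left)
  finally show "h' = h" .
qed (use h in blast)

lemma minv_mmul:
  assumes "invertible_mat n g"
  shows "minv n g \<in> mats n" "mmul n g (minv n g) = idm n" "mmul n (minv n g) g = idm n"
proof -
  obtain h where "h \<in> mats n" "mmul n g h = idm n" "mmul n h g = idm n"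
    using assms unfolding invertible_mat_def by auto
  with minv_eqI[OF this] show "minv n g \<in> mats n" "mmul n g (minv n g) = idm n"
    "mmul n (minv n g) g = idm n" by auto
qed

text \<open>By induction on the column \<open>j\<close>: below the diagonal, \<open>(h g) i j = h i j * g j j\<close>.\<close>
lemma left_inverse_upper_tri:
  fixes g h :: "'a::field mat"
  assumes g: "upper_tri n g" and h: "h \<in> mats n" and hg: "mmul n h g = idm n"
  shows "j < i \<Longrightarrow> h i j = 0"
proof (induction j arbitrary: i rule: less_induct)
  case (less j)
  show ?case
  proof (cases "j \<in> {1..n}")
    case True
    have gl: "\<And>a b. b < a \<Longrightarrow> g a b = 0" using g unfolding upper_tri_def by auto
    have col: "mmul n h g k j = h k j * g j j" if "j \<le> k" for k
      unfolding mmul_def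
    proof (rule sum_eq_single)
      fix l assume "l \<in> {1..n}" "l \<noteq> j"
      then show "h k l * g l j = 0"
        using less.IH[of l k] that gl[of j l] by (cases "l < j") auto
    qed (use True in auto)
    have "h j j * g j j = 1" using col[of j] hg True by (simp add: idm_def)
    moreover have "h i j * g j j = 0" using col[of i] hg less.prems by (simp add: idm_def)
    ultimately show ?thesis by (metis mult_zero_right no_zero_divisors zero_neq_one)
  qed (use mats_outside[OF h] in auto)
qed

lemma Bn_matsD:
  fixes g :: "'a::field mat"
  assumes "g \<in> Bn_mats n"
  shows "g \<in> mats n" "\<And>a b. b < a \<Longrightarrow> g a b = 0"
    "minv n g \<in> mats n" "\<And>a b. b < a \<Longrightarrow> minv n g a b = 0"
proof -
  have inv: "invertible_mat n g" and ut: "upper_tri n g" using assms unfolding Bn_mats_def by auto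
  show "g \<in> mats n" "\<And>a b. b < a \<Longrightarrow> g a b = 0" using ut unfolding upper_tri_def by auto
  show "minv n g \<in> mats n" "\<And>a b. b < a \<Longrightarrow> minv n g a b = 0"
    using minv_mmul[OF inv] left_inverse_upper_tri[OF ut] by auto
qed

lemma Nn_matsD:
  assumes "B \<in> Nn_mats n"
  shows "B \<in> mats n" "\<And>a b. b \<le> a \<Longrightarrow> B a b = 0"
  using assms unfolding Nn_mats_def upper_tri_def by (auto simp: le_less)

lemma conj_mat_entry:
  "conj_mat n g B p q = (\<Sum>s\<in>{1..n}. \<Sum>r\<in>{1..n}. g p r * B r s * minv n g s q)"
  unfolding conj_mat_def mmul_def by (simp add: sum_distrib_right)

lemma conj_mat_entry_cong:
  fixes g :: "'a::field mat"
  assumes g: "g \<in> Bn_mats n"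
    and eq: "\<And>r s. r \<in> {1..n} \<Longrightarrow> s \<in> {1..n} \<Longrightarrow> p \<le> r \<Longrightarrow> s \<le> q \<Longrightarrow> B r s = B' r s"
  shows "conj_mat n g B p q = conj_mat n g B' p q"
  unfolding conj_mat_entry
proof (intro sum.cong refl)
  fix s r assume "s \<in> {1..n}" "r \<in> {1..n}"
  then show "g p r * B r s * minv n g s q = g p r * B' r s * minv n g s q"
    using eq Bn_matsD(2,4)[OF g] by (cases "p \<le> r \<and> s \<le> q") (auto simp: not_le)
qed

lemma conj_mat_in_Nn_mats:
  fixes g :: "'a::field mat"
  assumes g: "g \<in> Bn_mats n" and B: "B \<in> Nn_mats n"
  shows "conj_mat n g B \<in> Nn_mats n"
proof -
  have "conj_mat n g B \<in> mats n"
    unfolding conj_mat_def using Bn_matsD[OF g] Nn_matsD[OF B] by (intro mmul_in_mats)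
  moreover have "conj_mat n g B p q = 0" if "q \<le> p" for p q
    unfolding conj_mat_entry
    using that Bn_matsD(2,4)[OF g] Nn_matsD(2)[OF B]
    by (intro sum.neutral ballI) (metis le_trans linorder_not_le mult_zero_left mult_zero_right)
  ultimately show ?thesis unfolding Nn_mats_def upper_tri_def by auto
qed

text \<open>If \<open>X\<^sup>2 = 0\<close> then \<open>1 + t X\<close> has inverse \<open>1 - t X\<close>.\<close>
lemma conj_mat_one_plus_nilpotent:
  fixes X :: "'a::field mat" and t :: 'a
  assumes X: "X \<in> mats n" "mmul n X X = (\<lambda>_ _. 0)" "\<And>a c. c \<le> a \<Longrightarrow> X a c = 0"
    and B: "B \<in> mats n"
  defines "g \<equiv> (\<lambda>a c. idm n a c + t * X a c)"
  shows "g \<in> Bn_mats n"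
    "conj_mat n g B = (\<lambda>p q. B p q + t * mmul n X B p q - t * mmul n B X p q
        - t * t * mmul n (mmul n X B) X p q)"
proof -
  define h where "h = (\<lambda>a c. idm n a c - t * X a c)"
  note simps = mmul_add_left mmul_add_right mmul_diff_left mmul_diff_right mmul_scale_left
    mmul_scale_right mmul_idm_left mmul_idm_right idm_in_mats X(1,2)
  have gh: "g \<in> mats n" "h \<in> mats n" using X(1) unfolding g_def h_def mats_def idm_def by auto
  have "mmul n g h = idm n" "mmul n h g = idm n" unfolding g_def h_def by (simp_all add: simps)
  then have "minv n g = h" "invertible_mat n g"
    using minv_eqI[OF gh(2)] gh unfolding invertible_mat_def by auto
  moreover have "upper_tri n g" using gh(1) X(3) unfolding upper_tri_def g_def idm_def by auto
  ultimately show "g \<in> Bn_mats n" unfolding Bn_mats_def by simp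
  have "mmul n X B \<in> mats n" using X(1) B by (rule mmul_in_mats)
  with \<open>minv n g = h\<close> show "conj_mat n g B = (\<lambda>p q. B p q + t * mmul n X B p q - t * mmul n B X p q
        - t * t * mmul n (mmul n X B) X p q)"
    unfolding conj_mat_def g_def h_def by (intro ext) (simp add: simps B algebra_simps)
qed

section \<open>Runs of Belitskii's algorithm\<close>

definition bel_before :: "nat \<Rightarrow> nat \<Rightarrow> nat \<Rightarrow> (nat \<times> nat) set" where
  "bel_before n i j = {(p, q). 1 \<le> p \<and> p < q \<and> q \<le> n \<and> bel_prec (p, q) (i, j)}"

definition entry_adjustable :: "nat \<Rightarrow> 'a::field mat \<Rightarrow> nat \<Rightarrow> nat \<Rightarrow> bool" where
  "entry_adjustable n B i j \<longleftrightarrow>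
     (\<forall>v. \<exists>g\<in>Bn_mats n. (\<forall>(p, q)\<in>bel_before n i j. conj_mat n g B p q = B p q)
                        \<and> conj_mat n g B i j = v)"

lemma bel_prec_irrefl: "\<not> bel_prec x x"
  unfolding bel_prec_def by auto

lemma bel_prec_asym: "bel_prec x y \<Longrightarrow> \<not> bel_prec y x"
  unfolding bel_prec_def by auto

lemma bel_prec_trans: "bel_prec x y \<Longrightarrow> bel_prec y z \<Longrightarrow> bel_prec x z"
  unfolding bel_prec_def by auto

lemma set_bel_positions: "set (bel_positions n) = {(a, c). 1 \<le> a \<and> a < c \<and> c \<le> n}"
proof (intro equalityI subsetI)
  fix x assume "x \<in> {(a, c). 1 \<le> a \<and> a < c \<and> c \<le> n}"
  then show "x \<in> set (bel_positions n)" unfolding bel_positions_def by (auto intro!: bexI)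
qed (auto simp: bel_positions_def)

lemma sorted_wrt_bel_positions: "sorted_wrt bel_prec (bel_positions n)"
proof -
  have "sorted_wrt bel_prec (concat (map (\<lambda>i. map (\<lambda>j. (i, j)) [Suc i..<Suc n]) rows))"
    if "sorted_wrt (>) rows" for rows
    using that by (induction rows) (auto simp: sorted_wrt_append sorted_wrt_map bel_prec_def)
  then show ?thesis unfolding bel_positions_def by (simp add: sorted_wrt_rev)
qed

lemma set_take_bel_positions:
  assumes "k < length (bel_positions n)" "bel_positions n ! k = (i, j)"
  shows "set (take k (bel_positions n)) = bel_before n i j"
proof -
  let ?L = "bel_positions n"
  have "y \<in> set (take k ?L) \<longleftrightarrow> y \<in> set ?L \<and> bel_prec y (?L ! k)" for y
  proof
    assume "y \<in> set (take k ?L)"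
    then obtain b where "b < k" "?L ! b = y" using assms by (auto simp: in_set_conv_nth)
    then show "y \<in> set ?L \<and> bel_prec y (?L ! k)"
      using sorted_wrt_nth_less[OF sorted_wrt_bel_positions _ assms(1)] assms(1) by auto
  next
    assume y: "y \<in> set ?L \<and> bel_prec y (?L ! k)"
    then obtain b where b: "b < length ?L" "?L ! b = y" by (auto simp: in_set_conv_nth)
    have "b < k"
      using sorted_wrt_nth_less[OF sorted_wrt_bel_positions _ b(1), of k] y b
        bel_prec_irrefl bel_prec_asym by (cases "b < k"; cases "b = k") auto
    then show "y \<in> set (take k ?L)" using b by (auto simp: in_set_conv_nth intro!: exI[of _ b])
  qed
  then show ?thesis using assms(2) unfolding set_bel_positions bel_before_def by auto
qed

lemma set_take_bel_positions_downward_closed: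
  assumes "x \<in> set (take m (bel_positions n))" "y \<in> set (bel_positions n)" "bel_prec y x"
  shows "y \<in> set (take m (bel_positions n))"
proof (cases "m < length (bel_positions n)")
  case True
  obtain i j where "bel_positions n ! m = (i, j)" by fastforce
  with True have "set (take m (bel_positions n)) = bel_before n i j" by (rule set_take_bel_positions)
  with assms show ?thesis unfolding set_bel_positions bel_before_def by (auto dest: bel_prec_trans)
qed (use assms in auto)

lemma bel_stepD:
  assumes "bel_step n k A G A' G'"
  shows "A' = A \<or> (\<exists>g\<in>G. A' = conj_mat n g A)"
    "G' = {g \<in> G. \<forall>pos \<in> set (take (Suc k) (bel_positions n)).
                 conj_mat n g A' (fst pos) (snd pos) = A' (fst pos) (snd pos)}"
    "{conj_mat n g A (fst (bel_positions n ! k)) (snd (bel_positions n ! k)) | g. g \<in> G} = UNIV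
      \<Longrightarrow> A' (fst (bel_positions n ! k)) (snd (bel_positions n ! k)) = 0"
  using assms unfolding bel_step_def Let_def similar_in_def by (auto split: if_splits)

locale belitskii_run =
  fixes n :: nat and As :: "nat \<Rightarrow> 'a::field mat" and Gs :: "nat \<Rightarrow> 'a mat set"
  assumes As_0: "As 0 \<in> Nn_mats n" and Gs_0: "Gs 0 = Bn_mats n"
    and steps: "\<And>k. k < length (bel_positions n) \<Longrightarrow> bel_step n k (As k) (Gs k) (As (Suc k)) (Gs (Suc k))"
begin

abbreviation "L \<equiv> bel_positions n"
abbreviation "N \<equiv> length (bel_positions n)"

lemma As_Gs_in: "m \<le> N \<Longrightarrow> As m \<in> Nn_mats n \<and> Gs m \<subseteq> Bn_mats n"
proof (induction m)
  case (Suc m)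
  then have "As m \<in> Nn_mats n" "Gs m \<subseteq> Bn_mats n"
    and st: "bel_step n m (As m) (Gs m) (As (Suc m)) (Gs (Suc m))" using steps by auto
  moreover have "As (Suc m) \<in> Nn_mats n"
    using bel_stepD(1)[OF st] \<open>As m \<in> Nn_mats n\<close> \<open>Gs m \<subseteq> Bn_mats n\<close> conj_mat_in_Nn_mats by (metis subsetD)
  ultimately show ?case using bel_stepD(2)[OF st] by blast
qed (simp add: As_0 Gs_0)

lemma As_Suc_frozen:
  assumes m: "m < N" and pos: "pos \<in> set (take m L)"
  shows "As (Suc m) (fst pos) (snd pos) = As m (fst pos) (snd pos)"
proof (cases m)
  case (Suc m')
  have st: "bel_step n m (As m) (Gs m) (As (Suc m)) (Gs (Suc m))" using steps m by auto
  have "bel_step n m' (As m') (Gs m') (As m) (Gs m)" using steps m Suc by auto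
  then have "\<forall>g\<in>Gs m. conj_mat n g (As m) (fst pos) (snd pos) = As m (fst pos) (snd pos)"
    using bel_stepD(2) pos Suc by blast
  then show ?thesis using bel_stepD(1)[OF st] by auto
qed (use pos in simp)

lemma As_frozen:
  "k \<le> m \<Longrightarrow> m \<le> N \<Longrightarrow> pos \<in> set (take k L) \<Longrightarrow> As m (fst pos) (snd pos) = As k (fst pos) (snd pos)"
proof (induction m)
  case (Suc m)
  show ?case
  proof (cases "k = Suc m")
    case False
    then have "k \<le> m" using Suc by simp
    have "pos \<in> set (take m L)" using Suc.prems(3) set_take_subset_set_take[OF \<open>k \<le> m\<close>, of L] by blast
    then have "As (Suc m) (fst pos) (snd pos) = As m (fst pos) (snd pos)"
      using As_Suc_frozen Suc.prems(2) by simp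
    with Suc.IH \<open>k \<le> m\<close> Suc.prems show ?thesis by simp
  qed simp
qed simp

text \<open>An entry of \<open>g B g\<inverse>\<close> only sees entries of \<open>B\<close> at Belitskii-earlier positions, and
  these are frozen from the step where they are treated on.\<close>
lemma conj_As_entry_frozen:
  assumes mk: "m \<le> k" "k \<le> N" and g: "g \<in> Bn_mats n" and pos: "(p, q) \<in> set (take m L)"
  shows "conj_mat n g (As m) p q = conj_mat n g (As k) p q"
proof (rule conj_mat_entry_cong[OF g])
  fix r s assume rs: "r \<in> {1..n}" "s \<in> {1..n}" "p \<le> r" "s \<le> q"
  show "As m r s = As k r s"
  proof (cases "r < s")
    case True
    with rs have "(r, s) = (p, q) \<or> bel_prec (r, s) (p, q)" "(r, s) \<in> set L"
      unfolding bel_prec_def set_bel_positions by auto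
    then have "(r, s) \<in> set (take m L)" using set_take_bel_positions_downward_closed pos by blast
    then show ?thesis using As_frozen[of m k "(r, s)"] mk by simp
  next
    case False
    have "As m \<in> Nn_mats n" "As k \<in> Nn_mats n" using As_Gs_in mk by auto
    with False show ?thesis using Nn_matsD(2) by (metis not_less)
  qed
qed

lemma stabilizer_mem:
  assumes k: "k \<le> N" and g: "g \<in> Bn_mats n"
    and fixes_earlier: "\<forall>(p, q) \<in> set (take k L). conj_mat n g (As k) p q = As k p q"
  shows "g \<in> Gs k"
proof -
  have "g \<in> Gs m" if "m \<le> k" for m
    using that
  proof (induction m)
    case (Suc m)
    have "conj_mat n g (As (Suc m)) p q = As (Suc m) p q"
      if pos: "(p, q) \<in> set (take (Suc m) L)" for p q
    proof -
      have "conj_mat n g (As (Suc m)) p q = conj_mat n g (As k) p q"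
        using conj_As_entry_frozen Suc.prems k g pos by blast
      also have "\<dots> = As k p q"
        using fixes_earlier pos set_take_subset_set_take[OF Suc.prems, of L] by fastforce
      also have "\<dots> = As (Suc m) p q" using As_frozen[of "Suc m" k "(p, q)"] Suc.prems k pos by simp
      finally show ?thesis .
    qed
    moreover have "bel_step n m (As m) (Gs m) (As (Suc m)) (Gs (Suc m))" using steps Suc k by auto
    ultimately show ?case using bel_stepD(2) Suc by fastforce
  qed (simp add: g Gs_0)
  then show ?thesis by simp
qed

lemma final_entry_zero:
  assumes k: "k < N" "L ! k = (i, j)" and adj: "entry_adjustable n (As k) i j"
  shows "As N i j = 0"
proof -
  have st: "bel_step n k (As k) (Gs k) (As (Suc k)) (Gs (Suc k))" using steps k by auto
  have "{conj_mat n g (As k) (fst (L ! k)) (snd (L ! k)) | g. g \<in> Gs k} = UNIV"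
  proof (intro set_eqI iffI)
    fix v :: 'a
    obtain g where g: "g \<in> Bn_mats n" "\<forall>(p, q)\<in>bel_before n i j. conj_mat n g (As k) p q = As k p q"
      "conj_mat n g (As k) i j = v"
      using adj unfolding entry_adjustable_def by blast
    then have "g \<in> Gs k" using stabilizer_mem[of k g] set_take_bel_positions[OF k] k by simp
    then show "v \<in> {conj_mat n g (As k) (fst (L ! k)) (snd (L ! k)) | g. g \<in> Gs k}" using g k by auto
  qed simp
  then have "As (Suc k) i j = 0" using bel_stepD(3)[OF st] k by simp
  moreover have "(i, j) \<in> set (take (Suc k) L)" using k by (simp add: take_Suc_conv_app_nth)
  ultimately show ?thesis using As_frozen[of "Suc k" N "(i, j)"] k by simp
qed

end

text \<open>The hypothesis is about every \<open>B\<close> agreeing with \<open>C\<close> before \<open>(i, j)\<close>: that is all that is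
  known of the matrix the algorithm holds when it treats position \<open>(i, j)\<close>.\<close>
lemma belitskii_cf_entry_zero:
  fixes C :: "'a::field mat"
  assumes cf: "is_belitskii_cf n C" and ij: "1 \<le> i" "i < j" "j \<le> n"
    and adj: "\<And>B. B \<in> Nn_mats n \<Longrightarrow> \<forall>(p, q)\<in>bel_before n i j. B p q = C p q \<Longrightarrow> entry_adjustable n B i j"
  shows "C i j = 0"
proof -
  obtain A As Gs where run: "belitskii_run n As Gs" and C: "C = As (length (bel_positions n))"
    using cf unfolding is_belitskii_cf_def belitskii_cf_of_def belitskii_run_def by blast
  interpret belitskii_run n As Gs by (fact run)
  obtain k where k: "k < N" "L ! k = (i, j)"
    using ij set_bel_positions[of n] by (metis (no_types, lifting) case_prodI in_set_conv_nth mem_Collect_eq)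
  have "\<forall>(p, q)\<in>bel_before n i j. As k p q = C p q"
    using As_frozen[of k N] set_take_bel_positions[OF k] k C by fastforce
  moreover have "As k \<in> Nn_mats n" using As_Gs_in k by simp
  ultimately have "entry_adjustable n (As k) i j" by (rule adj[rotated])
  then show ?thesis using final_entry_zero[OF k] C by simp
qed

section \<open>Adjusting a single entry\<close>

lemma QUn_subperm_entry:
  fixes A :: "'a::field mat"
  assumes A: "A \<in> QUn n (subperm I \<sigma>)" and I: "I \<subseteq> {1..n}" "\<sigma> ` I \<subseteq> {1..n}"
  obtains U where "U \<in> Un_mats n" "\<And>p c. A p c = (if p \<in> I then U (\<sigma> p) c else 0)"
proof -
  obtain U where U: "U \<in> Un_mats n" and AU: "A = mmul n (subperm I \<sigma>) U"
    using A unfolding QUn_def by auto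
  have "A p c = (if p \<in> I then U (\<sigma> p) c else 0)" for p c
  proof (cases "p \<in> I")
    case True
    with I have "\<sigma> p \<in> {1..n}" by auto
    with True show ?thesis unfolding AU mmul_def
      by (subst sum_eq_single[where a = "\<sigma> p"]) (auto simp: subperm_def)
  qed (simp add: AU mmul_def subperm_def)
  with U that show ?thesis by blast
qed

function back_subst :: "nat \<Rightarrow> 'a::field mat \<Rightarrow> nat \<Rightarrow> 'a" where
  "back_subst s U c =
     (if s \<le> c then (if c = s then 1 else 0) else - (\<Sum>d\<in>{c<..s}. U c d * back_subst s U d))"
  by auto
termination by (relation "measure (\<lambda>(s, U, c). s - c)") auto

declare back_subst.simps[simp del]

lemma unitriangular_solve_unit_vector:
  fixes U :: "'a::field mat"
  assumes U: "U \<in> Un_mats n" and s: "s \<in> {1..n}"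
  obtains x where "\<And>c. c < 1 \<or> s < c \<Longrightarrow> x c = 0"
    "\<And>r. r \<in> {1..n} \<Longrightarrow> (\<Sum>c\<in>{1..n}. U r c * x c) = (if r = s then 1 else 0)"
proof
  let ?x = "\<lambda>c. if 1 \<le> c then back_subst s U c else 0"
  show "?x c = 0" if "c < 1 \<or> s < c" for c
    using that by (auto simp: back_subst.simps)
  have Ul: "\<And>a b. b < a \<Longrightarrow> U a b = 0" and Ud: "\<And>a. a \<in> {1..n} \<Longrightarrow> U a a = 1"
    using U unfolding Un_mats_def upper_tri_def by auto
  fix r assume r: "r \<in> {1..n}"
  have "(\<Sum>c\<in>{1..n}. U r c * ?x c) = (\<Sum>c\<in>{r..s}. U r c * back_subst s U c)"
    using r s Ul by (intro sum.mono_neutral_cong_right) (auto simp: not_le back_subst.simps)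
  also have "\<dots> = (if r = s then 1 else 0)"
  proof (cases "r < s")
    case True
    then have "back_subst s U r = - (\<Sum>d\<in>{r<..s}. U r d * back_subst s U d)"
      by (subst back_subst.simps) simp
    moreover have "{r..s} = insert r {r<..s}" using True by auto
    ultimately show ?thesis using True Ud[OF r] by simp
  qed (use Ud r in \<open>auto simp: back_subst.simps\<close>)
  finally show "(\<Sum>c\<in>{1..n}. U r c * ?x c) = (if r = s then 1 else 0)" .
qed

lemma entry_adjustable_by_commutator:
  fixes B X :: "'a::field mat"
  assumes X: "X \<in> mats n" "mmul n X X = (\<lambda>_ _. 0)" "\<And>a c. c \<le> a \<Longrightarrow> X a c = 0"
    and B: "B \<in> mats n" and XBX: "mmul n (mmul n X B) X = (\<lambda>_ _. 0)"
    and before: "\<forall>(p, q)\<in>bel_before n i j. mmul n X B p q = mmul n B X p q"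
    and at: "mmul n X B i j \<noteq> mmul n B X i j"
  shows "entry_adjustable n B i j"
  unfolding entry_adjustable_def
proof
  fix v :: 'a
  define t where "t = (v - B i j) / (mmul n X B i j - mmul n B X i j)"
  define g where "g = (\<lambda>a c. idm n a c + t * X a c)"
  have g: "g \<in> Bn_mats n"
    and conj: "\<And>p q. conj_mat n g B p q = B p q + t * (mmul n X B p q - mmul n B X p q)"
    using conj_mat_one_plus_nilpotent[OF X B, of t] XBX unfolding g_def by (simp_all add: algebra_simps)
  have "conj_mat n g B i j = v"
    using at unfolding conj t_def by (simp add: field_simps)
  moreover have "\<forall>(p, q)\<in>bel_before n i j. conj_mat n g B p q = B p q"
    using before conj by auto
  ultimately show "\<exists>g\<in>Bn_mats n. (\<forall>(p, q)\<in>bel_before n i j. conj_mat n g B p q = B p q)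
                     \<and> conj_mat n g B i j = v"
    using g by blast
qed

text \<open>Case (1): \<open>X = x e\<^sub>j\<^sup>T\<close> with \<open>A x\<close> equal to the unit vector \<open>e\<^sub>i\<close> on the rows \<open>i..n\<close>,
  obtained from \<open>U x = e\<^sub>s\<close> for \<open>s = i\<^sup>+\<close>. As \<open>j\<close> is a chain head, row \<open>j\<close> of \<open>B\<close> vanishes,
  hence \<open>X B = 0\<close>.\<close>
lemma entry_adjustable_at_head:
  fixes A B U :: "'a::field mat"
  assumes U: "U \<in> Un_mats n" and A: "\<And>p c. A p c = (if p \<in> I then U (\<sigma> p) c else 0)"
    and \<sigma>: "inj_on \<sigma> I" "\<sigma> ` I \<subseteq> {1..n}" "\<forall>k\<in>I. k < \<sigma> k"
    and B: "B \<in> Nn_mats n" and agree: "\<forall>(p, q)\<in>bel_before n i j. B p q = A p q"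
    and i: "i \<in> I" "1 \<le> i" and j: "\<sigma> i < j" "j \<notin> I" "j \<le> n"
  shows "entry_adjustable n B i j"
proof -
  define s where "s = \<sigma> i"
  have s: "s \<in> {1..n}" "i < s" "s < j" using \<sigma> i j unfolding s_def by auto
  obtain x :: "nat \<Rightarrow> 'a" where x0: "\<And>c. c < 1 \<or> s < c \<Longrightarrow> x c = 0"
    and Ux: "\<And>r. r \<in> {1..n} \<Longrightarrow> (\<Sum>c\<in>{1..n}. U r c * x c) = (if r = s then 1 else 0)"
    using unitriangular_solve_unit_vector[OF U s(1)] by blast
  have Bm: "B \<in> mats n" and Bl: "\<And>a c. c \<le> a \<Longrightarrow> B a c = 0" using Nn_matsD[OF B] by auto
  have Ul: "\<And>a c. c < a \<Longrightarrow> U a c = 0" using U unfolding Un_mats_def upper_tri_def by auto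
  have Bx: "(\<Sum>k\<in>{1..n}. B p k * x k) = (if p = i then 1 else 0)" if p: "i \<le> p" "p \<le> n" for p
  proof -
    have "B p k * x k = A p k * x k" if k: "k \<in> {1..n}" for k
    proof (cases "k \<le> p \<or> s < k")
      case True
      then show ?thesis using Bl A Ul[of k "\<sigma> p"] \<sigma>(3) x0 by (cases "p \<in> I") force+
    next
      case False
      then have "(p, k) \<in> bel_before n i j" using p k s i unfolding bel_before_def bel_prec_def by auto
      then show ?thesis using agree by auto
    qed
    then have "(\<Sum>k\<in>{1..n}. B p k * x k) = (\<Sum>k\<in>{1..n}. A p k * x k)" by (rule sum.cong[OF refl])
    also have "\<dots> = (if p \<in> I \<and> \<sigma> p = s then 1 else 0)"
      using A Ux \<sigma>(2) by (cases "p \<in> I") auto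
    also have "\<dots> = (if p = i then 1 else 0)"
      using \<sigma>(1) i unfolding s_def by (auto dest: inj_onD)
    finally show ?thesis .
  qed
  have Bj: "B j c = 0" for c
  proof -
    have "(j, c) \<in> bel_before n i j" if "j < c" "c \<le> n"
      using that s i unfolding bel_before_def bel_prec_def by auto
    then show ?thesis using Bl[of c j] mats_outside[OF Bm, of j c] agree A j(2)
      by (cases "c \<le> j"; cases "c \<le> n") auto
  qed
  define X :: "'a mat" where "X = (\<lambda>a c. if c = j then x a else 0)"
  have XB: "mmul n X B = (\<lambda>_ _. 0)"
    unfolding mmul_def X_def by (intro ext sum.neutral) (simp add: Bj)
  have BX: "mmul n B X p q = (if q = j then \<Sum>k\<in>{1..n}. B p k * x k else 0)" for p q
    unfolding mmul_def X_def by simp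
  show ?thesis
  proof (rule entry_adjustable_by_commutator[OF _ _ _ Bm])
    show "X \<in> mats n" using x0 s j unfolding X_def mats_def by auto
    show "mmul n X X = (\<lambda>_ _. 0)"
      using x0[of j] s unfolding mmul_def X_def by (intro ext sum.neutral) auto
    show "X a c = 0" if "c \<le> a" for a c using that x0[of a] s unfolding X_def by auto
    show "mmul n (mmul n X B) X = (\<lambda>_ _. 0)" unfolding XB by (simp add: mmul_def)
    show "\<forall>(p, q)\<in>bel_before n i j. mmul n X B p q = mmul n B X p q"
      using Bx unfolding XB BX bel_before_def bel_prec_def by auto
    show "mmul n X B i j \<noteq> mmul n B X i j" using Bx[of i] s j unfolding XB BX by simp
  qed
qed

text \<open>Case (2): \<open>X = E\<^sub>i\<^sub>b\<close> with \<open>b = j\<^sup>-\<close>; the \<open>(i, j)\<close> entry of \<open>X B - B X\<close> is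
  \<open>B b j = a\<^sub>b\<^sub>j = 1\<close>.\<close>
lemma entry_adjustable_left_of_predecessor:
  fixes A B U :: "'a::field mat"
  assumes U: "U \<in> Un_mats n" and A: "\<And>p c. A p c = (if p \<in> I then U (\<sigma> p) c else 0)"
    and B: "B \<in> Nn_mats n" and agree: "\<forall>(p, q)\<in>bel_before n i j. B p q = A p q"
    and b: "b \<in> I" "\<sigma> b = j" "i < b" "b < j" and ij: "1 \<le> i" "j \<le> n"
  shows "entry_adjustable n B i j"
proof -
  have Bm: "B \<in> mats n" and Bl: "\<And>a c. c \<le> a \<Longrightarrow> B a c = 0" using Nn_matsD[OF B] by auto
  have Ul: "\<And>a c. c < a \<Longrightarrow> U a c = 0" and Ud: "\<And>a. a \<in> {1..n} \<Longrightarrow> U a a = 1"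
    using U unfolding Un_mats_def upper_tri_def by auto
  have bi: "b \<in> {1..n}" "i \<in> {1..n}" using b ij by auto
  have Bb: "B b q = (if q = j then 1 else 0)" if "q \<le> j" for q
  proof (cases "q \<le> b")
    case False
    then have "(b, q) \<in> bel_before n i j" using that b ij unfolding bel_before_def bel_prec_def by auto
    then show ?thesis using agree A b Ul[of q j] Ud[of j] that ij by auto
  qed (use Bl b in auto)
  define X :: "'a mat" where "X = matunit i b"
  have XB: "mmul n X B p q = (if p = i then B b q else 0)" for p q
    unfolding X_def using bi by (simp add: mmul_matunit_left)
  have BX: "mmul n B X p q = (if q = b then B p i else 0)" for p q
    unfolding X_def using bi by (simp add: mmul_matunit_right)
  show ?thesis
  proof (rule entry_adjustable_by_commutator[OF _ _ _ Bm])
    show "X \<in> mats n" using bi unfolding X_def mats_def matunit_def by auto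
    show "mmul n X X = (\<lambda>_ _. 0)"
      using b unfolding X_def by (intro ext) (simp only: mmul_matunit_left[OF bi(1)], simp add: matunit_def)
    show "X a c = 0" if "c \<le> a" for a c using that b unfolding X_def matunit_def by auto
    have "B b i = 0" using Bl b(3) by simp
    then show "mmul n (mmul n X B) X = (\<lambda>_ _. 0)"
      unfolding X_def
      by (intro ext) (simp add: mmul_matunit_left[OF bi(1)] mmul_matunit_right[OF bi(2)])
    show "\<forall>(p, q)\<in>bel_before n i j. mmul n X B p q = mmul n B X p q"
      using Bb Bl b unfolding XB BX bel_before_def bel_prec_def by auto
    show "mmul n X B i j \<noteq> mmul n B X i j" using Bb[of j] b unfolding XB BX by simp
  qed
qed

section \<open>Chains of a subpermutation\<close>

lemma rtrancl_Un_converse_single_valued: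
  assumes sv: "single_valued R" "single_valued (R\<inverse>)" and xy: "(x, y) \<in> (R \<union> R\<inverse>)\<^sup>*"
  shows "(x, y) \<in> R\<^sup>* \<or> (y, x) \<in> R\<^sup>*"
  using xy
proof (induction rule: rtrancl_induct)
  case (step y z)
  from step.IH show ?case
  proof
    assume xy: "(x, y) \<in> R\<^sup>*"
    show ?thesis
    proof (cases "(z, y) \<in> R \<and> x \<noteq> y")
      case True
      then obtain w where "(x, w) \<in> R\<^sup>*" "(w, y) \<in> R" using xy by (auto elim: rtranclE)
      with True sv(2) show ?thesis by (auto dest: single_valuedD)
    qed (use xy step.hyps(2) in auto)
  next
    assume yx: "(y, x) \<in> R\<^sup>*"
    show ?thesis
    proof (cases "(y, z) \<in> R \<and> x \<noteq> y")
      case True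
      then obtain w where "(y, w) \<in> R" "(w, x) \<in> R\<^sup>*" using yx by (auto elim: converse_rtranclE)
      with True sv(1) show ?thesis by (auto dest: single_valuedD)
    qed (use yx step.hyps(2) in \<open>auto intro: converse_rtrancl_into_rtrancl\<close>)
  qed
qed simp

lemma same_chain_successor:
  assumes chain: "same_chain I \<sigma> i j" and \<sigma>: "inj_on \<sigma> I" "\<forall>k\<in>I. k < \<sigma> k"
    and i: "i \<in> I" and j: "\<sigma> i < j"
  shows "j \<in> \<sigma> ` I \<and> i < the_inv_into I \<sigma> j"
proof -
  let ?R = "{(k, \<sigma> k) | k. k \<in> I}"
  have sv: "single_valued ?R" "single_valued (?R\<inverse>)"
    using \<sigma>(1) by (auto intro!: single_valuedI dest: inj_onD)
  have incr: "a \<le> b" if "(a, b) \<in> ?R\<^sup>*" for a b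
    using that
  proof (induction rule: rtrancl_induct)
    case (step b c)
    then show ?case using \<sigma>(2) by fastforce
  qed simp
  have "{(\<sigma> k, k) | k. k \<in> I} = ?R\<inverse>" by auto
  then have "(i, j) \<in> (?R \<union> ?R\<inverse>)\<^sup>*" using chain unfolding same_chain_def by simp
  then have "(i, j) \<in> ?R\<^sup>* \<or> (j, i) \<in> ?R\<^sup>*" by (rule rtrancl_Un_converse_single_valued[OF sv])
  moreover have "(j, i) \<notin> ?R\<^sup>*" using incr[of j i] \<sigma>(2) i j by fastforce
  ultimately have "(i, j) \<in> ?R\<^sup>*" by blast
  moreover have "i \<noteq> j" using \<sigma>(2) i j by force
  ultimately obtain k where k: "(i, k) \<in> ?R\<^sup>*" "k \<in> I" "j = \<sigma> k" by (auto elim: rtranclE)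
  then have "i < k" using incr[OF k(1)] j by (cases "k = i") auto
  moreover have "the_inv_into I \<sigma> j = k" using k \<sigma>(1) by (simp add: the_inv_into_f_f)
  ultimately show ?thesis using k by auto
qed

theorem theorem4p6:
  fixes n :: nat and I :: "nat set" and \<sigma> :: "nat \<Rightarrow> nat" and A :: "'a::field mat"
  assumes I_sub: "I \<subseteq> {1..n}"
    and \<sigma>_inj: "inj_on \<sigma> I"
    and \<sigma>_range: "\<sigma> ` I \<subseteq> {1..n}"
    and \<sigma>_incr: "\<forall>i\<in>I. i < \<sigma> i"
    and A_QU: "A \<in> QUn n (subperm I \<sigma>)"
    and A_cf: "is_belitskii_cf n A"
    and i_I: "i \<in> I"
    and j_n: "j \<in> {1..n}"
  shows "(\<sigma> i < j \<and> j \<in> {1..n} - I \<longrightarrow> A i j = 0)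
       \<and> (j \<notin> {1..n} - \<sigma> ` I \<and> i < the_inv_into I \<sigma> j \<longrightarrow> A i j = 0)
       \<and> (same_chain I \<sigma> i j \<and> j \<noteq> \<sigma> i \<longrightarrow> A i j = 0)"
proof -
  obtain U where U: "U \<in> Un_mats n" and A: "\<And>p c. A p c = (if p \<in> I then U (\<sigma> p) c else 0)"
    using QUn_subperm_entry[OF A_QU I_sub \<sigma>_range] by blast
  have i: "1 \<le> i" using I_sub i_I by auto
  have head: "A i j = 0" if j: "\<sigma> i < j" "j \<notin> I"
  proof (rule belitskii_cf_entry_zero[OF A_cf i])
    show "i < j" "j \<le> n" using j \<sigma>_incr i_I j_n by auto
  qed (use entry_adjustable_at_head[OF U A \<sigma>_inj \<sigma>_range \<sigma>_incr _ _ i_I i j] j_n in auto)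
  have pred: "A i j = 0" if "j \<in> \<sigma> ` I" "i < the_inv_into I \<sigma> j"
  proof -
    define b where "b = the_inv_into I \<sigma> j"
    have "b \<in> I" "\<sigma> b = j" "i < b"
      using that the_inv_into_into[OF \<sigma>_inj] f_the_inv_into_f[OF \<sigma>_inj] unfolding b_def by auto
    then have b: "b \<in> I" "\<sigma> b = j" "i < b" "b < j" using \<sigma>_incr by auto
    show ?thesis
    proof (rule belitskii_cf_entry_zero[OF A_cf i])
      show "i < j" "j \<le> n" using b j_n by auto
    qed (use entry_adjustable_left_of_predecessor[OF U A _ _ b i] j_n in auto)
  qed
  have "A i j = 0" if "same_chain I \<sigma> i j" "j \<noteq> \<sigma> i"
  proof (cases "j < \<sigma> i")
    case True
    then show ?thesis using A i_I U unfolding Un_mats_def upper_tri_def by simp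
  next
    case False
    with that have "j \<in> \<sigma> ` I \<and> i < the_inv_into I \<sigma> j"
      using same_chain_successor \<sigma>_inj \<sigma>_incr i_I by fastforce
    then show ?thesis using pred by blast
  qed
  then show ?thesis using head pred j_n by blast
qed

end
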